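(* For every behavior $r$, $\mathcal C\big(\partial_{\simeq}(\mathcal C(\partial_{\simeq} r))\big)\simeq\partial_{\simeq}(\mathcal C(\partial_{\simeq} r))$, where $\simeq$ is applied to sets of behaviors as defined below.
   Context: Let $\Sigma$ be a finite alphabet. Behaviors are the terms generated by $r,s ::= \phi \mid \varepsilon \mid x\ (x\in\Sigma) \mid r+s \mid r\cdot s \mid r^* \mid \mathrm{fork}(r)$. The concurrent part $\mathcal C(r)$ is the behavior defined by: $\mathcal C(\phi)=\phi$, $\mathcal C(\varepsilon)=\varepsilon$, $\mathcal C(x)=\phi$, $\mathcal C(r+s)=\mathcal C(r)+\mathcal C(s)$, $\mathcal C(r\cdot s)=\mathcal C(r)\cdot\mathcal C(s)$, $\mathcal C(r^* )=\mathcal C(r)^*$, $\mathcal C(\mathrm{fork}(r))=\mathrm{fork}(r)$; for a set $R$ of behaviors, $\mathcal C(R)=\{\mathcal C(r)\mid r\in R\}$. The derivative $\partial_x r$ of a behavior $r$ by $x\in\Sigma$ is the behavior defined by: $\partial_x\phi=\phi$, $\partial_x\varepsilon=\phi$, $\partial_x y=\varepsilon$ if $y=x$ and $\phi$ otherwise, $\partial_x(r+s)=\partial_x r+\partial_x s$, $\partial_x(r\cdot s)=\partial_x r\cdot s+\mathcal C(r)\cdot\partial_x s$, $\partial_x(r^* )=\partial_x r\cdot r^*$, $\partial_x(\mathrm{fork}(r))=\mathrm{fork}(\partial_x r)$; it is extended to words by $\partial_\varepsilon r=r$ and $\partial_{xw}r=\partial_w(\partial_x r)$. A descendant of $r$ is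 any behavior $\partial_w r$ with $w\in\Sigma^*$; $\partial r$ denotes the set of descendants of $r$, and for a set $R$, $\partial R=\bigcup_{r\in R}\partial r$. Similarity $\simeq$ is the smallest relation on behaviors that is reflexive, symmetric, transitive, closed under contexts (if $s\simeq t$ then $E[s]\simeq E[t]$ for every context $E ::= [\,] \mid E^* \mid E\cdot s \mid r\cdot E \mid E+s \mid r+E \mid \mathrm{fork}(E)$, where $E[t]$ replaces the hole by $t$), and contains the axioms $r+(s+t)\simeq(r+s)+t$, $r+s\simeq s+r$, $r+r\simeq r$, $r+\phi\simeq r$, $\phi+r\simeq r$, $\varepsilon\cdot r\simeq r$, $r\cdot\varepsilon\simeq r$, $\varepsilon^*\simeq\varepsilon$, $\mathrm{fork}(\varepsilon)\simeq\varepsilon$, $\phi\cdot r\simeq\phi$, $r\cdot\phi\simeq\phi$, $\phi^*\simeq\varepsilon$, $\mathrm{fork}(\phi)\simeq\phi$. For sets of behaviors, $R\simeq S$ iff every $r\in R$ is similar to some $s\in S$ and every $s\in S$ is similar to some $r\in R$. The set of dissimilar descendants $\partial_{\simeq} r$ is a set containing exactly one (arbitrarily chosen) representative of each $\simeq$-equivalence class of elements of $\partial r$; for a set $R$, $\partial_{\simeq}R$ is a set containing exactly one (arbitrarily chosen) representative of each $\simeq$-class of elements of $\partial R$. *)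

theory Defs
  imports Main
begin

datatype 'a beh =
    Phi
  | Eps
  | Sym 'a
  | Plus "'a beh" "'a beh"
  | Seq "'a beh" "'a beh"
  | Star "'a beh"
  | Fork "'a beh"

fun conc :: "'a beh \<Rightarrow> 'a beh" where
  "conc Phi = Phi"
| "conc Eps = Eps"
| "conc (Sym x) = Phi"
| "conc (Plus r s) = Plus (conc r) (conc s)"
| "conc (Seq r s) = Seq (conc r) (conc s)"
| "conc (Star r) = Star (conc r)"
| "conc (Fork r) = Fork r"

fun deriv :: "'a \<Rightarrow> 'a beh \<Rightarrow> 'a beh" where
  "deriv x Phi = Phi"
| "deriv x Eps = Phi"
| "deriv x (Sym y) = (if y = x then Eps else Phi)"
| "deriv x (Plus r s) = Plus (deriv x r) (deriv x s)"
| "deriv x (Seq r s) = Plus (Seq (deriv x r) s) (Seq (conc r) (deriv x s))"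
| "deriv x (Star r) = Seq (deriv x r) (Star r)"
| "deriv x (Fork r) = Fork (deriv x r)"

fun derivw :: "'a list \<Rightarrow> 'a beh \<Rightarrow> 'a beh" where
  "derivw [] r = r"
| "derivw (x # w) r = derivw w (deriv x r)"

definition descs :: "'a beh \<Rightarrow> 'a beh set" where
  "descs r = {derivw w r | w. True}"

definition descs_set :: "'a beh set \<Rightarrow> 'a beh set" where
  "descs_set R = (\<Union>r\<in>R. descs r)"

datatype 'a ctx =
    Hole
  | CStar "'a ctx"
  | CSeqL "'a ctx" "'a beh"
  | CSeqR "'a beh" "'a ctx"
  | CPlusL "'a ctx" "'a beh"
  | CPlusR "'a beh" "'a ctx"
  | CFork "'a ctx"

fun fill :: "'a ctx \<Rightarrow> 'a beh \<Rightarrow> 'a beh" where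
  "fill Hole t = t"
| "fill (CStar E) t = Star (fill E t)"
| "fill (CSeqL E s) t = Seq (fill E t) s"
| "fill (CSeqR r E) t = Seq r (fill E t)"
| "fill (CPlusL E s) t = Plus (fill E t) s"
| "fill (CPlusR r E) t = Plus r (fill E t)"
| "fill (CFork E) t = Fork (fill E t)"

inductive sim :: "'a beh \<Rightarrow> 'a beh \<Rightarrow> bool" (infix "\<simeq>" 50) where
  sim_refl: "r \<simeq> r"
| sim_sym: "s \<simeq> t \<Longrightarrow> t \<simeq> s"
| sim_trans: "r \<simeq> s \<Longrightarrow> s \<simeq> t \<Longrightarrow> r \<simeq> t"
| sim_ctx: "s \<simeq> t \<Longrightarrow> fill E s \<simeq> fill E t"
| ax_assoc: "Plus r (Plus s t) \<simeq> Plus (Plus r s) t"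
| ax_comm: "Plus r s \<simeq> Plus s r"
| ax_idem: "Plus r r \<simeq> r"
| ax_plus_phi_r: "Plus r Phi \<simeq> r"
| ax_plus_phi_l: "Plus Phi r \<simeq> r"
| ax_eps_seq_l: "Seq Eps r \<simeq> r"
| ax_eps_seq_r: "Seq r Eps \<simeq> r"
| ax_star_eps: "Star Eps \<simeq> Eps"
| ax_fork_eps: "Fork Eps \<simeq> Eps"
| ax_phi_seq_l: "Seq Phi r \<simeq> Phi"
| ax_phi_seq_r: "Seq r Phi \<simeq> Phi"
| ax_star_phi: "Star Phi \<simeq> Eps"
| ax_fork_phi: "Fork Phi \<simeq> Phi"

definition set_sim :: "'a beh set \<Rightarrow> 'a beh set \<Rightarrow> bool" where
  "set_sim R S \<longleftrightarrow> (\<forall>r\<in>R. \<exists>s\<in>S. r \<simeq> s) \<and> (\<forall>s\<in>S. \<exists>r\<in>R. s \<simeq> r)"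

text \<open>\<open>is_dissim R D\<close>: D is a valid choice of \<open>\<partial>_\<simeq> R\<close>, i.e. D contains exactly one
  representative of each \<open>\<simeq>\<close>-class of elements of \<open>\<partial> R\<close>.\<close>
definition is_dissim :: "'a beh set \<Rightarrow> 'a beh set \<Rightarrow> bool" where
  "is_dissim R D \<longleftrightarrow> D \<subseteq> descs_set R \<and> (\<forall>x\<in>descs_set R. \<exists>!d. d \<in> D \<and> x \<simeq> d)"

end

theory Submission
  imports Defs
begin

text \<open>The concurrent part is idempotent and the derivative of a fixed point of \<open>conc\<close> is
  again one, so every descendant of an element of \<open>conc ` D1\<close> is fixed by \<open>conc\<close>.
  Hence \<open>conc ` D2 = D2\<close>, which is stronger than similarity.\<close>

lemma conc_conc: "conc (conc r) = conc r"
  by (induction r) auto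

lemma conc_deriv_fixed: "conc t = t \<Longrightarrow> conc (deriv x t) = deriv x t"
  by (induction t) auto

lemma conc_derivw_fixed: "conc t = t \<Longrightarrow> conc (derivw w t) = derivw w t"
  by (induction w arbitrary: t) (auto simp: conc_deriv_fixed)

lemma conc_descs_set_conc:
  assumes "d \<in> descs_set (conc ` R)"
  shows "conc d = d"
proof -
  from assms obtain s w where "d = derivw w (conc s)"
    by (auto simp: descs_set_def descs_def)
  then show ?thesis
    by (simp add: conc_derivw_fixed conc_conc)
qed

lemma set_sim_refl: "set_sim R R"
  by (auto simp: set_sim_def intro: sim_refl)

theorem lemma10:
  fixes r :: "'a::finite beh"
    and D1 D2 :: "'a beh set"
  assumes "is_dissim {r} D1"
    and "is_dissim (conc ` D1) D2"
  shows "set_sim (conc ` D2) D2"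
proof -
  have "D2 \<subseteq> descs_set (conc ` D1)"
    using assms(2) by (simp add: is_dissim_def)
  then have "conc ` D2 = D2"
    using conc_descs_set_conc by (force simp: image_iff)
  then show ?thesis
    by (simp add: set_sim_refl)
qed

end
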